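(* Let $q$ be a prime power, $s,\ell$ positive integers with $q\equiv 1\pmod{\ell}$, and let $\alpha\in\{1,-1\}\subseteq\mathbb{F}_q$. Assume $\gcd(s,q)=1$, and that $s$ is odd if $\alpha=-1$. Then no two-dimensional $(\alpha,1)$-constacyclic code of length $s.\ell$ over $\mathbb{F}_q$, i.e. no ideal $\mathcal{C}$ of $\mathbb{F}_q[x,y]/\langle x^s-\alpha,\,y^\ell-1\rangle$, is self-dual.
   Context: Elements of $\mathbb{F}_q[x,y]/\langle x^s-\alpha,y^\ell-1\rangle$ are identified with vectors $(c_{i,j})$ of length $s\ell$ via the coefficients of $x^iy^j$ ($0\le i\le s-1$, $0\le j\le\ell-1$). Self-dual means $\mathcal{C}=\mathcal{C}^\perp$ with respect to the Euclidean inner product $\sum_{i,j}c_{i,j}d_{i,j}$. *)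

theory Defs
  imports Main "HOL-Library.Cardinality"
begin

text \<open>Elements of F[x,y]/<x^s - alpha, y^l - 1> are represented by their
coefficient arrays c i j (coefficient of x^i y^j), 0 <= i < s, 0 <= j < l,
extended by 0 outside this box.\<close>

definition amb :: "nat \<Rightarrow> nat \<Rightarrow> (nat \<Rightarrow> nat \<Rightarrow> 'a::zero) set" where
  "amb s l = {c. \<forall>i j. (s \<le> i \<or> l \<le> j) \<longrightarrow> c i j = 0}"

definition cadd :: "(nat \<Rightarrow> nat \<Rightarrow> 'a::plus) \<Rightarrow> (nat \<Rightarrow> nat \<Rightarrow> 'a) \<Rightarrow> nat \<Rightarrow> nat \<Rightarrow> 'a" where
  "cadd a b = (\<lambda>i j. a i j + b i j)"

text \<open>Multiplication in the quotient ring: x^(i1+i2) = alpha^((i1+i2) div s) x^((i1+i2) mod s),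
y^(j1+j2) = y^((j1+j2) mod l).\<close>
definition cmult :: "nat \<Rightarrow> nat \<Rightarrow> 'a::comm_ring_1 \<Rightarrow> (nat \<Rightarrow> nat \<Rightarrow> 'a) \<Rightarrow> (nat \<Rightarrow> nat \<Rightarrow> 'a) \<Rightarrow> nat \<Rightarrow> nat \<Rightarrow> 'a" where
  "cmult s l \<alpha> a b = (\<lambda>i j. if i < s \<and> j < l then
      (\<Sum>i1<s. \<Sum>j1<l. \<Sum>i2<s. \<Sum>j2<l.
         (if (i1 + i2) mod s = i \<and> (j1 + j2) mod l = j
          then \<alpha> ^ ((i1 + i2) div s) * a i1 j1 * b i2 j2 else 0))
      else 0)"

definition is_ideal :: "nat \<Rightarrow> nat \<Rightarrow> 'a::comm_ring_1 \<Rightarrow> (nat \<Rightarrow> nat \<Rightarrow> 'a) set \<Rightarrow> bool" where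
  "is_ideal s l \<alpha> C \<longleftrightarrow> C \<subseteq> amb s l \<and> (\<lambda>i j. 0) \<in> C
     \<and> (\<forall>a\<in>C. \<forall>b\<in>C. cadd a b \<in> C)
     \<and> (\<forall>r\<in>amb s l. \<forall>a\<in>C. cmult s l \<alpha> r a \<in> C)"

definition einner :: "nat \<Rightarrow> nat \<Rightarrow> (nat \<Rightarrow> nat \<Rightarrow> 'a::comm_ring_1) \<Rightarrow> (nat \<Rightarrow> nat \<Rightarrow> 'a) \<Rightarrow> 'a" where
  "einner s l c d = (\<Sum>i<s. \<Sum>j<l. c i j * d i j)"

definition dual_code :: "nat \<Rightarrow> nat \<Rightarrow> (nat \<Rightarrow> nat \<Rightarrow> 'a::comm_ring_1) set \<Rightarrow> (nat \<Rightarrow> nat \<Rightarrow> 'a) set" where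
  "dual_code s l C = {d \<in> amb s l. \<forall>c\<in>C. einner s l c d = 0}"

definition self_dual :: "nat \<Rightarrow> nat \<Rightarrow> (nat \<Rightarrow> nat \<Rightarrow> 'a::comm_ring_1) set \<Rightarrow> bool" where
  "self_dual s l C \<longleftrightarrow> C = dual_code s l C"

end

theory Submission
  imports Defs "HOL-Number_Theory.Residues"
begin

text \<open>Let \<open>w = (\<Sum>i<s. \<alpha>^i x^i) (\<Sum>j<l. y^j)\<close>. Since \<open>\<alpha>\<^sup>2 = 1\<close> and \<open>\<alpha>^s = \<alpha>\<close>,
  \<open>x w = \<alpha> w\<close> and \<open>y w = w\<close>, so \<open>c w = \<langle>c, w\<rangle> w\<close> for every \<open>c\<close>, while \<open>\<langle>w, w\<rangle> = s l\<close>,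
  which is a unit in \<open>\<bbbF>\<^sub>q\<close>. If \<open>C\<close> is self-dual, then either \<open>\<langle>c, w\<rangle> \<noteq> 0\<close> for some
  \<open>c \<in> C\<close>, and the nonzero multiple \<open>c w\<close> of \<open>w\<close> lies in \<open>C\<close>, or \<open>w \<in> C\<^sup>\<bottom> = C\<close>. Either
  way \<open>C\<close> contains a nonzero multiple of \<open>w\<close>, which is not self-orthogonal.\<close>

lemma sum_if_add_mod_eq_const:
  fixes f :: "nat \<Rightarrow> 'a::comm_monoid_add"
  assumes "0 < s" and "i < s"
    and const: "\<And>i2. i2 < s \<Longrightarrow> (i1 + i2) mod s = i \<Longrightarrow> f i2 = K"
  shows "(\<Sum>i2<s. if (i1 + i2) mod s = i then f i2 else 0) = K"
proof -
  define i0 where "i0 = (i + s - i1 mod s) mod s"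
  have i0: "i0 < s" "(i1 + i0) mod s = i"
  proof -
    show "i0 < s" using \<open>0 < s\<close> by (simp add: i0_def)
    have "(i1 + i0) mod s = (i1 mod s + (i + s - i1 mod s)) mod s"
      unfolding i0_def by (metis mod_add_eq mod_mod_trivial)
    also have "i1 mod s + (i + s - i1 mod s) = i + s"
      using mod_less_divisor[OF \<open>0 < s\<close>, of i1] by linarith
    finally show "(i1 + i0) mod s = i" using \<open>i < s\<close> by simp
  qed
  have unique: "x = i0" if "x < s" "(i1 + x) mod s = i" for x
  proof -
    have "[i1 + x = i1 + i0] (mod s)" using that i0 by (simp add: cong_def)
    then have "[x = i0] (mod s)" by (simp add: cong_add_lcancel_nat)
    then show ?thesis using that i0 by (simp add: cong_def)
  qed
  have "{i2\<in>{..<s}. (i1 + i2) mod s = i} = {i0}" using unique i0 by blast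
  then have "(\<Sum>i2<s. if (i1 + i2) mod s = i then f i2 else 0) = f i0"
    by (simp add: sum.inter_filter[symmetric])
  with const i0 show ?thesis by simp
qed

lemma sum_if_add_mod_eq_const2:
  fixes f :: "nat \<Rightarrow> nat \<Rightarrow> 'a::comm_monoid_add"
  assumes "0 < s" "i < s" "0 < l" "j < l"
    and const: "\<And>i2 j2. i2 < s \<Longrightarrow> j2 < l \<Longrightarrow> (i1 + i2) mod s = i \<Longrightarrow> (j1 + j2) mod l = j
                  \<Longrightarrow> f i2 j2 = K"
  shows "(\<Sum>i2<s. \<Sum>j2<l. if (i1 + i2) mod s = i \<and> (j1 + j2) mod l = j then f i2 j2 else 0) = K"
proof -
  have "(\<Sum>j2<l. if (i1 + i2) mod s = i \<and> (j1 + j2) mod l = j then f i2 j2 else 0)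
      = (if (i1 + i2) mod s = i then K else 0)" if "i2 < s" for i2
    using sum_if_add_mod_eq_const[OF \<open>0 < l\<close> \<open>j < l\<close>, of j1 "f i2" K] const that by auto
  then show ?thesis
    using sum_if_add_mod_eq_const[OF \<open>0 < s\<close> \<open>i < s\<close>, of i1 "\<lambda>_. K" K] by simp
qed

lemma sum_swap_pairs:
  "(\<Sum>i1<s. \<Sum>j1<l. \<Sum>i2<s. \<Sum>j2<l. F i1 j1 i2 j2) =
   (\<Sum>i2<s. \<Sum>j2<l. \<Sum>i1<s. \<Sum>j1<l. F i1 j1 i2 j2)"
  unfolding sum.cartesian_product
  by (rule sum.reindex_bij_witness[where i="\<lambda>(a,b,c,d). (c,d,a,b)" and j="\<lambda>(a,b,c,d). (c,d,a,b)"]) auto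

lemma cmult_commute: "cmult s l \<alpha> a b = cmult s l \<alpha> b a"
  unfolding cmult_def
  by (subst (2) sum_swap_pairs, intro ext if_cong sum.cong refl) (simp_all add: add.commute mult_ac)

definition twisted_ones :: "nat \<Rightarrow> nat \<Rightarrow> 'a::comm_ring_1 \<Rightarrow> nat \<Rightarrow> nat \<Rightarrow> 'a" where
  "twisted_ones s l \<alpha> = (\<lambda>i j. if i < s \<and> j < l then \<alpha> ^ i else 0)"

lemma twisted_ones_in_amb: "twisted_ones s l \<alpha> \<in> amb s l"
  by (simp add: amb_def twisted_ones_def)

lemma power_mult_power_self_eq_1:
  fixes \<alpha> :: "'a::comm_monoid_mult"
  assumes "\<alpha> * \<alpha> = 1"
  shows "\<alpha> ^ k * \<alpha> ^ k = 1"
  by (metis assms power_mult_distrib power_one)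

lemma power_div_mult_power_eq:
  fixes \<alpha> :: "'a::comm_monoid_mult"
  assumes "\<alpha> * \<alpha> = 1" and "\<alpha> ^ s = \<alpha>" and "(i1 + i2) mod s = i"
  shows "\<alpha> ^ ((i1 + i2) div s) * \<alpha> ^ i2 = \<alpha> ^ i1 * \<alpha> ^ i"
proof -
  note inv = power_mult_power_self_eq_1[OF \<open>\<alpha> * \<alpha> = 1\<close>]
  have "\<alpha> ^ i1 * \<alpha> ^ i2 = \<alpha> ^ (s * ((i1 + i2) div s) + (i1 + i2) mod s)"
    by (simp flip: power_add)
  also have "\<dots> = \<alpha> ^ ((i1 + i2) div s) * \<alpha> ^ i"
    by (simp add: power_add power_mult assms(2,3))
  finally have split: "\<alpha> ^ i1 * \<alpha> ^ i2 = \<alpha> ^ ((i1 + i2) div s) * \<alpha> ^ i" .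
  have "\<alpha> ^ ((i1 + i2) div s) * \<alpha> ^ i2 = \<alpha> ^ ((i1 + i2) div s) * \<alpha> ^ i2 * (\<alpha> ^ i * \<alpha> ^ i)"
    by (simp add: inv)
  also have "\<dots> = (\<alpha> ^ ((i1 + i2) div s) * \<alpha> ^ i) * \<alpha> ^ i2 * \<alpha> ^ i"
    by (simp only: mult_ac)
  also have "\<dots> = \<alpha> ^ i1 * \<alpha> ^ i2 * \<alpha> ^ i2 * \<alpha> ^ i"
    by (simp only: split)
  also have "\<dots> = \<alpha> ^ i1 * (\<alpha> ^ i2 * \<alpha> ^ i2) * \<alpha> ^ i"
    by (simp only: mult.assoc)
  also have "\<dots> = \<alpha> ^ i1 * \<alpha> ^ i"
    by (simp add: inv)
  finally show ?thesis .
qed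

lemma cmult_twisted_ones:
  assumes "0 < s" "0 < l" "\<alpha> * \<alpha> = 1" "\<alpha> ^ s = \<alpha>"
  shows "cmult s l \<alpha> c (twisted_ones s l \<alpha>)
       = (\<lambda>i j. einner s l c (twisted_ones s l \<alpha>) * twisted_ones s l \<alpha> i j)"
proof (intro ext)
  fix i j
  show "cmult s l \<alpha> c (twisted_ones s l \<alpha>) i j
      = einner s l c (twisted_ones s l \<alpha>) * twisted_ones s l \<alpha> i j"
  proof (cases "i < s \<and> j < l")
    case False
    then show ?thesis by (auto simp: cmult_def twisted_ones_def)
  next
    case True
    have "cmult s l \<alpha> c (twisted_ones s l \<alpha>) i j = (\<Sum>i1<s. \<Sum>j1<l. c i1 j1 * \<alpha> ^ i1 * \<alpha> ^ i)"
      unfolding cmult_def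
    proof (simp only: True simp_thms if_True, intro sum.cong refl)
      fix i1 j1
      show "(\<Sum>i2<s. \<Sum>j2<l. if (i1 + i2) mod s = i \<and> (j1 + j2) mod l = j
              then \<alpha> ^ ((i1 + i2) div s) * c i1 j1 * twisted_ones s l \<alpha> i2 j2 else 0)
          = c i1 j1 * \<alpha> ^ i1 * \<alpha> ^ i"
      proof (rule sum_if_add_mod_eq_const2)
        fix i2 j2
        assume "i2 < s" "j2 < l" "(i1 + i2) mod s = i"
        have "\<alpha> ^ ((i1 + i2) div s) * c i1 j1 * \<alpha> ^ i2 = c i1 j1 * (\<alpha> ^ ((i1 + i2) div s) * \<alpha> ^ i2)"
          by (simp only: mult_ac)
        also have "\<dots> = c i1 j1 * \<alpha> ^ i1 * \<alpha> ^ i"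
          by (simp add: power_div_mult_power_eq[OF assms(3,4) \<open>(i1 + i2) mod s = i\<close>] mult.assoc)
        finally show "\<alpha> ^ ((i1 + i2) div s) * c i1 j1 * twisted_ones s l \<alpha> i2 j2 = c i1 j1 * \<alpha> ^ i1 * \<alpha> ^ i"
          using \<open>i2 < s\<close> \<open>j2 < l\<close> by (simp add: twisted_ones_def)
      qed (use True assms in auto)
    qed
    also have "\<dots> = einner s l c (twisted_ones s l \<alpha>) * twisted_ones s l \<alpha> i j"
      using True by (simp add: einner_def twisted_ones_def sum_distrib_right)
    finally show ?thesis .
  qed
qed

lemma einner_scale: "einner s l (\<lambda>i j. t * c i j) (\<lambda>i j. u * d i j) = t * u * einner s l c d"
  unfolding einner_def by (simp add: sum_distrib_left ac_simps)

lemma einner_twisted_ones_self: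
  assumes "\<alpha> * \<alpha> = 1"
  shows "einner s l (twisted_ones s l \<alpha>) (twisted_ones s l \<alpha>) = of_nat (s * l)"
  unfolding einner_def twisted_ones_def
  by (simp add: power_mult_power_self_eq_1[OF assms])

lemma self_dual_einner_eq_0:
  assumes "self_dual s l C" and "c \<in> C" and "d \<in> C"
  shows "einner s l c d = 0"
proof -
  have "d \<in> dual_code s l C"
    using assms(1,3) unfolding self_dual_def by blast
  with \<open>c \<in> C\<close> show ?thesis by (simp add: dual_code_def)
qed

lemma einner_twisted_ones_self_eq_0_if_self_dual:
  fixes \<alpha> :: "'a::field"
  assumes "0 < s" "0 < l" "\<alpha> * \<alpha> = 1" "\<alpha> ^ s = \<alpha>"
    and ideal: "is_ideal s l \<alpha> C" and self_dual: "self_dual s l C"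
  shows "einner s l (twisted_ones s l \<alpha>) (twisted_ones s l \<alpha>) = 0"
proof -
  let ?w = "twisted_ones s l \<alpha>"
  obtain t where "t \<noteq> 0" and tw_C: "(\<lambda>i j. t * ?w i j) \<in> C"
  proof (cases "\<exists>c\<in>C. einner s l c ?w \<noteq> 0")
    case True
    then obtain c where "c \<in> C" and "einner s l c ?w \<noteq> 0" by blast
    have "cmult s l \<alpha> ?w c \<in> C"
      using ideal twisted_ones_in_amb[of s l \<alpha>] \<open>c \<in> C\<close> by (simp add: is_ideal_def)
    then have "(\<lambda>i j. einner s l c ?w * ?w i j) \<in> C"
      by (simp only: cmult_commute[of s l \<alpha> ?w] cmult_twisted_ones[OF assms(1-4)])
    with \<open>einner s l c ?w \<noteq> 0\<close> show ?thesis by (rule that)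
  next
    case False
    then have "?w \<in> dual_code s l C"
      using twisted_ones_in_amb[of s l \<alpha>] by (simp add: dual_code_def)
    then have "?w \<in> C" using self_dual unfolding self_dual_def by blast
    then show ?thesis using that[of 1] by simp
  qed
  have "einner s l (\<lambda>i j. t * ?w i j) (\<lambda>i j. t * ?w i j) = 0"
    using self_dual tw_C tw_C by (rule self_dual_einner_eq_0)
  with \<open>t \<noteq> 0\<close> show ?thesis by (simp add: einner_scale)
qed

lemma of_nat_neq_0_if_coprime_card:
  assumes "coprime n CARD('a::{ring_1, finite})"
  shows "(of_nat n :: 'a) \<noteq> 0"
proof
  assume "(of_nat n :: 'a) = 0"
  then have "CHAR('a) dvd n" by (simp only: of_nat_eq_0_iff_char_dvd)
  then have "CHAR('a) dvd 1"
    using CHAR_dvd_CARD assms by (meson coprime_common_divisor)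
  then show False by (simp flip: of_nat_eq_0_iff_char_dvd)
qed

theorem theorem5:
  fixes \<alpha> :: "'a::{field, finite}"
    and s l :: nat
    and C :: "(nat \<Rightarrow> nat \<Rightarrow> 'a) set"
  assumes "0 < s" and "0 < l"
    and "CARD('a) mod l = 1 mod l"
    and "\<alpha> = 1 \<or> \<alpha> = -1"
    and "coprime s (CARD('a))"
    and "\<alpha> = -1 \<Longrightarrow> odd s"
    and "is_ideal s l \<alpha> C"
  shows "\<not> self_dual s l C"
proof
  assume "self_dual s l C"
  have "\<alpha> * \<alpha> = 1" "\<alpha> ^ s = \<alpha>"
    using assms(4,6) by (auto simp: power_minus_odd)
  then have "(of_nat (s * l) :: 'a) = 0"
    using einner_twisted_ones_self_eq_0_if_self_dual[OF assms(1,2) _ _ assms(7) \<open>self_dual s l C\<close>]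
    by (simp add: einner_twisted_ones_self)
  moreover have "coprime l CARD('a)"
    using assms(2,3) by (metis coprime_1_right coprime_mod_right_iff not_gr0)
  then have "coprime (s * l) CARD('a)"
    using assms(5) by simp
  ultimately show False
    using of_nat_neq_0_if_coprime_card by blast
qed

end
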